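(* Let $1\le b\le k$ be integers. The number of words $w$ of length $k$ over the alphabet $\{1,\dots,b\}$ such that every letter $1,\dots,b$ occurs in $w$ at least once and $w$ avoids each of the patterns $111$, $212$, $112$ and $213$ equals $$d_{k,b}=\binom{b}{k-b}C_b,$$ where $C_b=\frac{1}{b+1}\binom{2b}{b}$ is the $b$-th Catalan number (and the binomial coefficient is $0$ when $k-b>b$).
   Context: A word $w$ contains a pattern $p=p_1\cdots p_m$ (a word over positive integers) if $w$ has a subsequence $w_{i_1}\cdots w_{i_m}$, $i_1<\dots<i_m$, that is order-isomorphic to $p$, i.e. $w_{i_s}<w_{i_t}$ iff $p_s<p_t$ and $w_{i_s}=w_{i_t}$ iff $p_s=p_t$ for all $s,t$; otherwise $w$ avoids $p$. *)

theory Defs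
  imports Main "HOL-Library.Sublist"
begin

definition order_iso :: "nat list \<Rightarrow> nat list \<Rightarrow> bool" where
  "order_iso u p \<longleftrightarrow> length u = length p \<and>
     (\<forall>s<length p. \<forall>t<length p.
        (u ! s < u ! t \<longleftrightarrow> p ! s < p ! t) \<and> (u ! s = u ! t \<longleftrightarrow> p ! s = p ! t))"

definition contains :: "nat list \<Rightarrow> nat list \<Rightarrow> bool" where
  "contains w p \<longleftrightarrow> (\<exists>u. subseq u w \<and> order_iso u p)"

definition avoids :: "nat list \<Rightarrow> nat list \<Rightarrow> bool" where
  "avoids w p \<longleftrightarrow> \<not> contains w p"

definition catalan :: "nat \<Rightarrow> nat" where
  "catalan n = (2 * n choose n) div (n + 1)"

end

theory Submission
  imports Defs "HOL-Computational_Algebra.Formal_Power_Series"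
begin

(* Avoiding 111, 212, 112 and 213 at once means having no subsequence a b c with b <= a <= c;
   call such words admissible. In an admissible word over {1..n+1} the letter 1 occurs at most
   twice, a second occurrence can only be the last letter, and every letter before the first 1
   exceeds every letter between the two. So the word is x' 1 y' r with r empty or 1, where y' is
   an admissible word over {2..m+1} and x' one over {m+2..n+1}, and this decomposition is
   bijective. For the length generating functions Q n this gives Q 0 = 1 and
   Q (n+1) = (X + X^2) * sum_m Q (n-m) * Q m, the convolution recurrence of the Catalan numbers,
   whence Q n = C n * (X + X^2)^n, whose coefficient of X^k is C n * binomial n (k - n). *)

unbundle fps_syntax

section \<open>Catalan numbers\<close>

lemma Suc_dvd_central_binomial: "Suc n dvd (2 * n choose n)"
proof (cases n)
  case 0
  then show ?thesis by simp
next
  case (Suc k)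
  then have "Suc (n + k) = 2 * n" "Suc k = n" by simp_all
  then have "Suc n * (2 * n choose Suc n) = n * (2 * n choose n)"
    using Suc_times_binomial_add[of n k] by (simp only:)
  then have "2 * n choose n = Suc n * ((2 * n choose n) - (2 * n choose Suc n))"
    by (simp add: diff_mult_distrib2)
  then show ?thesis by (metis dvd_triv_left)
qed

lemma real_catalan_conv_fact: "real (catalan n) = fact (2 * n) / (fact n * fact (Suc n))"
proof -
  have "real (catalan n) = real (2 * n choose n) / real (Suc n)"
    using Suc_dvd_central_binomial[of n] by (simp add: catalan_def real_of_nat_div)
  also have "\<dots> = fact (2 * n) / (fact n * fact (Suc n))"
    by (simp add: binomial_fact field_simps)
  finally show ?thesis .
qed

lemma gbinomial_half_Suc: "((1/2 :: real) gchoose Suc n) * (-4) ^ Suc n = - 2 * real (catalan n)"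
proof -
  define P where "P = pochhammer (1/2 :: real) n"
  have sign: "(-1 :: real) ^ Suc n * (-1) ^ Suc n = 1"
    by (simp flip: power_mult_distrib)
  have "((1/2 :: real) gchoose Suc n) * (-4) ^ Suc n
      = ((-1) ^ Suc n * (- 1/2) * P / fact (Suc n)) * ((-1) ^ Suc n * 4 ^ Suc n)"
    by (simp add: P_def gbinomial_pochhammer pochhammer_rec flip: power_mult_distrib)
  also have "\<dots> = - 2 * (4 ^ n * P * fact n) / (fact n * fact (Suc n))"
    using sign by (simp add: field_simps del: fact_Suc)
  also have "4 ^ n * P * fact n = fact (2 * n)"
    by (simp add: P_def fact_double power_mult)
  finally show ?thesis
    by (simp add: real_catalan_conv_fact)
qed

lemma catalan_Suc: "catalan (Suc n) = (\<Sum>m\<le>n. catalan m * catalan (n - m))"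
proof -
  \<comment> \<open>The u k are the Taylor coefficients of sqrt(1 - 4x), whose square 1 - 4x has no terms
    of degree N \<ge> 2; by Vandermonde's identity this is 1/2 + 1/2 = 1.\<close>
  define u :: "nat \<Rightarrow> real" where "u k = ((1/2) gchoose k) * (-4) ^ k" for k
  define N where "N = Suc (Suc n)"
  have "(\<Sum>k\<le>N. u k * u (N - k)) = (\<Sum>k\<le>N. ((1/2) gchoose k) * ((1/2) gchoose (N - k))) * (-4) ^ N"
    unfolding sum_distrib_right
    by (intro sum.cong refl) (simp add: u_def power_add[symmetric])
  also have "\<dots> = (1 gchoose N) * (-4) ^ N"
    using gbinomial_Vandermonde[of "1/2 :: real" "1/2" N] by (simp add: atMost_atLeast0)
  also have "\<dots> = 0"
    using binomial_gbinomial[of 1 N] by (simp add: N_def)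
  finally have "(\<Sum>k\<le>N. u k * u (N - k)) = 0" .
  moreover have "(\<Sum>k\<le>N. u k * u (N - k)) = 2 * u N + (\<Sum>m\<le>n. u (Suc m) * u (Suc (n - m)))"
  proof -
    have "(\<Sum>k\<le>Suc n. u (Suc k) * u (Suc n - k)) = (\<Sum>m\<le>n. u (Suc m) * u (Suc (n - m))) + u N * u 0"
      by (simp add: N_def Suc_diff_le)
    then show ?thesis
      by (simp add: N_def sum.atMost_Suc_shift u_def del: sum.atMost_Suc)
  qed
  moreover have "u (Suc m) = - 2 * real (catalan m)" for m
    using gbinomial_half_Suc by (simp only: u_def)
  ultimately have "4 * (\<Sum>m\<le>n. real (catalan m * catalan (n - m))) = 4 * real (catalan (Suc n))"
    by (simp add: N_def sum_distrib_left)
  then have "real (\<Sum>m\<le>n. catalan m * catalan (n - m)) = real (catalan (Suc n))"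
    by (simp only: of_nat_sum mult_cancel_left) simp
  then show ?thesis
    by (simp only: of_nat_eq_iff)
qed

lemma subseq_map_rightE:
  assumes "subseq xs (map f ys)"
  obtains zs where "xs = map f zs" and "subseq zs ys"
  using assms by (metis nths_map subseq_conv_nths)

lemma subseq_set_subset: "subseq xs ys \<Longrightarrow> set xs \<subseteq> set ys"
  by (metis subseq_conv_nths set_nths_subset)

lemma append_Cons_eq_iff':
  "x \<notin> set xs \<Longrightarrow> x \<notin> set xs' \<Longrightarrow> xs @ x # ys = xs' @ x # ys' \<longleftrightarrow> xs = xs' \<and> ys = ys'"
proof (induction xs arbitrary: xs')
  case Nil
  then show ?case by (cases xs') auto
next
  case (Cons a xs)
  then show ?case by (cases xs') auto
qed

lemma interval_splitE:
  fixes l h :: nat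
  assumes "X \<union> Y = {l..h}" "\<forall>u\<in>X. \<forall>v\<in>Y. v < u"
  obtains m where "Y = {l..<l + m}" "X = {l + m..h}" "m \<le> Suc h - l"
proof (cases "Y = {}")
  case True
  with assms(1) show ?thesis
    by (intro that[of 0]) auto
next
  case False
  define M where "M = Max Y"
  have "finite Y"
    using assms(1) by (metis finite_Un finite_atLeastAtMost)
  with False have M: "M \<in> Y" "\<forall>v\<in>Y. v \<le> M"
    by (simp_all add: M_def)
  with assms(2) have above: "\<forall>u\<in>X. M < u"
    by blast
  have "z \<in> Y \<longleftrightarrow> z \<in> {l..h} \<and> z \<le> M" "z \<in> X \<longleftrightarrow> z \<in> {l..h} \<and> M < z" for z
    using assms(1) M(2) above by (blast dest: leD)+
  moreover have "l \<le> M" "M \<le> h"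
    using assms(1) M(1) by auto
  ultimately have "Y = {l..<l + (Suc M - l)}" "X = {l + (Suc M - l)..h}" "Suc M - l \<le> Suc h - l"
    by auto
  then show ?thesis
    by (rule that)
qed

section \<open>Admissible words\<close>

definition admissible :: "'a::linorder list \<Rightarrow> bool" where
  "admissible w \<longleftrightarrow> \<not> (\<exists>a b c. subseq [a, b, c] w \<and> b \<le> a \<and> a \<le> c)"

lemma avoids_length3:
  "avoids w [p, q, r] \<longleftrightarrow> \<not> (\<exists>x y z. subseq [x, y, z] w \<and> order_iso [x, y, z] [p, q, r])"
proof -
  have "order_iso u [p, q, r] \<Longrightarrow> \<exists>x y z. u = [x, y, z]" for u
    by (auto simp: order_iso_def length_Suc_conv numeral_3_eq_3)
  then show ?thesis
    unfolding avoids_def contains_def by blast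
qed

lemma order_iso_length3_patterns:
  fixes x y z :: nat
  shows "order_iso [x, y, z] [1,1,1] \<longleftrightarrow> x = y \<and> y = z"
    and "order_iso [x, y, z] [2,1,2] \<longleftrightarrow> y < x \<and> x = z"
    and "order_iso [x, y, z] [1,1,2] \<longleftrightarrow> x = y \<and> y < z"
    and "order_iso [x, y, z] [2,1,3] \<longleftrightarrow> y < x \<and> x < z"
  by (auto simp: order_iso_def All_less_Suc)

lemma avoids_four_patterns_iff_admissible:
  "avoids w [1,1,1] \<and> avoids w [2,1,2] \<and> avoids w [1,1,2] \<and> avoids w [2,1,3] \<longleftrightarrow> admissible w"
proof -
  have "b \<le> a \<and> a \<le> c \<longleftrightarrow> (a = b \<and> b = c) \<or> (b < a \<and> a = c) \<or> (a = b \<and> b < c) \<or> (b < a \<and> a < c)"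
    for a b c :: nat
    by auto
  then show ?thesis
    unfolding admissible_def avoids_length3 order_iso_length3_patterns by blast
qed

lemma admissible_subseq: "admissible w \<Longrightarrow> subseq v w \<Longrightarrow> admissible v"
  unfolding admissible_def using subseq_order.order_trans by blast

lemma admissibleD: "admissible w \<Longrightarrow> subseq [a, b, c] w \<Longrightarrow> b \<le> a \<Longrightarrow> a \<le> c \<Longrightarrow> False"
  unfolding admissible_def by blast

lemma admissible_map_iff:
  assumes "strict_mono_on (set w) f"
  shows "admissible (map f w) \<longleftrightarrow> admissible w"
proof
  assume adm: "admissible (map f w)"
  show "admissible w"
    unfolding admissible_def
  proof clarify
    fix a b c assume abc: "subseq [a, b, c] w" "b \<le> a" "a \<le> c"
    then have "{a, b, c} \<subseteq> set w"
      using subseq_set_subset by fastforce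
    with abc(2,3) have "f b \<le> f a" "f a \<le> f c"
      using strict_mono_on_less_eq[OF assms] by auto
    moreover have "subseq [f a, f b, f c] (map f w)"
      using subseq_map[OF abc(1)] by simp
    ultimately show False
      using admissibleD[OF adm] by blast
  qed
next
  assume adm: "admissible w"
  show "admissible (map f w)"
    unfolding admissible_def
  proof clarify
    fix a b c assume abc: "subseq [a, b, c] (map f w)" "b \<le> a" "a \<le> c"
    from abc(1) obtain zs where zs: "[a, b, c] = map f zs" "subseq zs w"
      by (rule subseq_map_rightE)
    from zs(1) obtain a' b' c' where "zs = [a', b', c']" and fzs: "a = f a'" "b = f b'" "c = f c'"
      by (auto simp: Cons_eq_map_conv)
    with zs(2) have sub: "subseq [a', b', c'] w"
      by simp
    then have "{a', b', c'} \<subseteq> set w"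
      using subseq_set_subset by fastforce
    with abc(2,3) fzs have "b' \<le> a'" "a' \<le> c'"
      using strict_mono_on_less_eq[OF assms] by auto
    with adm sub show False
      by (rule admissibleD)
  qed
qed

lemma admissible_append:
  assumes "admissible xs" "admissible ys" "\<And>u v. u \<in> set xs \<Longrightarrow> v \<in> set ys \<Longrightarrow> v < u"
  shows "admissible (xs @ ys)"
  unfolding admissible_def
proof clarify
  fix a b c assume abc: "subseq [a, b, c] (xs @ ys)" "b \<le> a" "a \<le> c"
  from abc(1) obtain l r where lr: "[a, b, c] = l @ r" "subseq l xs" "subseq r ys"
    by (rule subseq_appendE)
  consider "r = []" | "l = []" | "a \<in> set l" "c \<in> set r"
    using lr(1) by (cases l; cases r rule: rev_cases) auto
  then show False
  proof cases
    case 1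
    with lr have "subseq [a, b, c] xs" by simp
    with assms(1) show False using abc(2,3) by (rule admissibleD)
  next
    case 2
    with lr have "subseq [a, b, c] ys" by simp
    with assms(2) show False using abc(2,3) by (rule admissibleD)
  next
    case 3
    then have "a \<in> set xs" "c \<in> set ys"
      using lr(2,3) subseq_set_subset by blast+
    with assms(3) abc(3) show False
      by (meson leD)
  qed
qed

lemma admissible_Cons_min:
  assumes "admissible ys" "\<And>v. v \<in> set ys \<Longrightarrow> x < v"
  shows "admissible (x # ys)"
  unfolding admissible_def
proof clarify
  fix a b c assume abc: "subseq [a, b, c] (x # ys)" "b \<le> a" "a \<le> c"
  show False
  proof (cases "a = x")
    case True
    with abc(1) have "b \<in> set ys"
      using subseq_set_subset by fastforce
    with assms(2) abc(2) True show False
      by (meson leD)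
  next
    case False
    with abc(1) have "subseq [a, b, c] ys" by simp
    with assms(1) show False using abc(2,3) by (rule admissibleD)
  qed
qed

lemma admissible_Cons_min_snoc:
  assumes "admissible ys" "\<And>v. v \<in> set ys \<Longrightarrow> x < v"
  shows "admissible (x # ys @ [x])"
  unfolding admissible_def
proof clarify
  fix a b c assume abc: "subseq [a, b, c] (x # ys @ [x])" "b \<le> a" "a \<le> c"
  then have "subseq [a, b, c] ((x # ys) @ [x])"
    by simp
  then obtain l r where lr: "[a, b, c] = l @ r" "subseq l (x # ys)" "subseq r [x]"
    by (rule subseq_appendE)
  have "r = [] \<or> r = [x]"
    using list_emb_length[OF lr(3)] subseq_set_subset[OF lr(3)] by (cases r) auto
  then consider "r = []" | "l = [a, b]" "c = x"
    using lr(1) by auto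
  then show False
  proof cases
    case 1
    have "admissible (x # ys)"
      using assms by (rule admissible_Cons_min)
    moreover from 1 lr have "subseq [a, b, c] (x # ys)" by simp
    ultimately show False using abc(2,3) by (rule admissibleD)
  next
    case 2
    have "a \<in> set ys \<or> b \<in> set ys"
      using lr(2) 2(1) subseq_set_subset by (cases "a = x") fastforce+
    with assms(2) abc(2,3) 2(2) show False
      by (meson leD order.trans)
  qed
qed

lemma admissible_append_Cons_less:
  assumes "admissible (A @ x # B)" "u \<in> set A" "v \<in> set B" "x \<le> u"
  shows "v < u"
proof (rule ccontr)
  assume "\<not> v < u"
  have "subseq ([u] @ [x, v]) (A @ x # B)"
    using assms(2,3) by (intro list_emb_append_mono) (simp_all add: subseq_singleton_left)
  moreover have "u \<le> v"
    using \<open>\<not> v < u\<close> by simp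
  ultimately show False
    using admissibleD[OF assms(1)] assms(4) by simp
qed

lemma admissible_min_splitE:
  assumes "admissible w" "x \<in> set w" "\<And>v. v \<in> set w \<Longrightarrow> x \<le> v"
  obtains A B r where "w = A @ x # B @ r" "x \<notin> set A" "x \<notin> set B" "r \<in> {[], [x]}"
    and "\<forall>u\<in>set A. \<forall>v\<in>set B. v < u"
proof -
  from split_list_first[OF assms(2)] obtain A T where w: "w = A @ x # T" and "x \<notin> set A"
    by (elim exE conjE)
  obtain B r where T: "T = B @ r" "x \<notin> set B" "r \<in> {[], [x]}"
  proof (cases "x \<in> set T")
    case True
    from split_list_first[OF this] obtain B C where T: "T = B @ x # C" and "x \<notin> set B"
      by (elim exE conjE)
    have "C = []"
    proof (rule ccontr)
      assume "C \<noteq> []"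
      then obtain h where "h \<in> set C"
        by (cases C) auto
      with assms(1) have "h < x"
        using admissible_append_Cons_less[of "A @ x # B" x C x h] by (simp add: w T)
      with assms(3) \<open>h \<in> set C\<close> show False
        by (fastforce simp: w T)
    qed
    with T \<open>x \<notin> set B\<close> show ?thesis
      by (intro that[of B "[x]"]) auto
  qed (use that[of T "[]"] in auto)
  have "\<forall>u\<in>set A. \<forall>v\<in>set B. v < u"
    using assms(1,3) admissible_append_Cons_less[of A x "B @ r"] by (simp add: w T)
  with w T \<open>x \<notin> set A\<close> show ?thesis
    by (intro that) auto
qed

section \<open>Decomposition at the letter 1\<close>

definition adm_words :: "nat \<Rightarrow> nat list set" where
  "adm_words n = {w. set w = {1..n} \<and> admissible w}"

lemma map_add_in_adm_words_iff:
  "set (map (\<lambda>v. v + c) x) = {Suc c..k + c} \<and> admissible (map (\<lambda>v. v + c) x) \<longleftrightarrow> x \<in> adm_words k"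
proof -
  have "strict_mono_on (set x) (\<lambda>v. v + c)"
    by (simp add: strict_mono_on_def)
  moreover have "inj (\<lambda>v::nat. v + c)"
    by (simp add: inj_on_def)
  then have "(\<lambda>v. v + c) ` set x = {Suc c..k + c} \<longleftrightarrow> set x = {1..k}"
    by (metis image_add_atLeastAtMost' inj_image_eq_iff plus_1_eq_Suc add.commute)
  ultimately show ?thesis
    by (simp add: adm_words_def admissible_map_iff)
qed

definition glue :: "nat \<Rightarrow> nat list \<Rightarrow> nat list \<Rightarrow> nat list \<Rightarrow> nat list" where
  "glue m r x y = map (\<lambda>v. v + Suc m) x @ 1 # map Suc y @ r"

lemma glue_in_adm_words:
  assumes "m \<le> n" "r \<in> {[], [1]}" "x \<in> adm_words (n - m)" "y \<in> adm_words m"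
  shows "glue m r x y \<in> adm_words (Suc n)"
proof -
  define A where "A = map (\<lambda>v. v + Suc m) x"
  define B where "B = map Suc y"
  have A: "set A = {Suc (Suc m)..Suc n}" "admissible A"
    using map_add_in_adm_words_iff[of "Suc m" x "n - m"] assms(1,3) by (simp_all add: A_def)
  have B: "set B = {2..Suc m}" "admissible B"
    using map_add_in_adm_words_iff[of 1 y m] assms(4) by (simp_all add: B_def)
  have "admissible (1 # B @ r)"
    using assms(2) admissible_Cons_min[OF B(2)] admissible_Cons_min_snoc[OF B(2)] B(1) by auto
  moreover have "set (1 # B @ r) \<subseteq> {1..Suc m}"
    using assms(2) B(1) by auto
  ultimately have "admissible (A @ 1 # B @ r)"
    using A by (intro admissible_append) auto
  moreover have "set (A @ 1 # B @ r) = {1..Suc n}"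
    using assms(1,2) A(1) B(1) by auto
  ultimately show ?thesis
    by (simp add: adm_words_def glue_def A_def B_def)
qed

lemma adm_words_0: "adm_words 0 = {[]}"
  by (auto simp: adm_words_def admissible_def)

lemma adm_words_pos: "w \<in> adm_words n \<Longrightarrow> v \<in> set w \<Longrightarrow> 1 \<le> v"
  by (auto simp: adm_words_def)

lemma shift_to_adm_words:
  assumes "admissible A" "set A = {Suc c..k + c}"
  obtains x where "A = map (\<lambda>v. v + c) x" "x \<in> adm_words k"
proof
  define x where "x = map (\<lambda>v. v - c) A"
  show A: "A = map (\<lambda>v. v + c) x"
    using assms(2) by (auto simp: x_def intro!: map_idI[symmetric])
  have "set (map (\<lambda>v. v + c) x) = {Suc c..k + c} \<and> admissible (map (\<lambda>v. v + c) x)"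
    using assms by (simp only: A[symmetric])
  then show "x \<in> adm_words k"
    by (simp only: map_add_in_adm_words_iff)
qed

lemma adm_words_Suc_glueE:
  assumes "w \<in> adm_words (Suc n)"
  obtains m r x y where "m \<le> n" "r \<in> {[], [1]}" "x \<in> adm_words (n - m)" "y \<in> adm_words m"
    and "w = glue m r x y"
proof -
  have sw: "set w = {1..Suc n}" and adm: "admissible w"
    using assms by (simp_all add: adm_words_def)
  have one_in: "1 \<in> set w" and one_le: "\<And>v. v \<in> set w \<Longrightarrow> 1 \<le> v"
    using sw by auto
  obtain A B r where w: "w = A @ 1 # B @ r" and "1 \<notin> set A" "1 \<notin> set B" "r \<in> {[], [1]}"
    and below: "\<forall>u\<in>set A. \<forall>v\<in>set B. v < u"
    by (rule admissible_min_splitE[OF adm one_in one_le])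
  have "set r \<subseteq> {1}"
    using \<open>r \<in> {[], [1]}\<close> by auto
  then have "set A \<union> set B = set w - {1}"
    using \<open>1 \<notin> set A\<close> \<open>1 \<notin> set B\<close> unfolding w by auto
  also have "\<dots> = {2..Suc n}"
    unfolding sw by auto
  finally have "set A \<union> set B = {2..Suc n}" .
  then obtain m where B: "set B = {2..<2 + m}" and A: "set A = {2 + m..Suc n}" and "m \<le> n"
    using below by (rule interval_splitE) auto
  have "subseq A w"
    unfolding w by (rule subseq_rev_drop_many) simp
  moreover have "subseq B w"
    unfolding w by (rule subseq_drop_many, rule list_emb.list_emb_Cons, rule subseq_rev_drop_many) simp
  ultimately have "admissible A" "admissible B"
    using adm admissible_subseq by blast+
  have "set A = {Suc (Suc m)..n - m + Suc m}"
    using A \<open>m \<le> n\<close> by auto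
  with \<open>admissible A\<close> obtain x where x: "A = map (\<lambda>v. v + Suc m) x" "x \<in> adm_words (n - m)"
    by (rule shift_to_adm_words)
  have "set B = {Suc 1..m + 1}"
    using B by (simp add: atLeastLessThanSuc_atLeastAtMost numeral_2_eq_2)
  with \<open>admissible B\<close> obtain y where y: "B = map (\<lambda>v. v + 1) y" "y \<in> adm_words m"
    by (rule shift_to_adm_words)
  have "w = glue m r x y"
    using x(1) y(1) by (simp add: w glue_def)
  with \<open>m \<le> n\<close> \<open>r \<in> {[], [1]}\<close> x(2) y(2) show ?thesis
    by (rule that)
qed

lemma glue_inject:
  assumes "glue m r x y = glue m' r' x' y'" "r \<in> {[], [1]}" "r' \<in> {[], [1]}"
    and "x \<in> adm_words k" "x' \<in> adm_words k'" "y \<in> adm_words m" "y' \<in> adm_words m'"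
  shows "m = m' \<and> r = r' \<and> x = x' \<and> y = y'"
proof -
  have no_one: "1 \<notin> set (map (\<lambda>v. v + Suc m) x)" "1 \<notin> set (map (\<lambda>v. v + Suc m') x')"
    using adm_words_pos[OF assms(4)] adm_words_pos[OF assms(5)] by fastforce+
  from assms(1)
  have "map (\<lambda>v. v + Suc m) x = map (\<lambda>v. v + Suc m') x' \<and> map Suc y @ r = map Suc y' @ r'"
    unfolding glue_def by (simp only: append_Cons_eq_iff'[OF no_one])
  then have x: "map (\<lambda>v. v + Suc m) x = map (\<lambda>v. v + Suc m') x'"
    and y: "map Suc y @ r = map Suc y' @ r'"
    by (rule conjunct1, rule conjunct2)
  have "set (map Suc y) \<union> set r = set (map Suc y') \<union> set r'"
    using arg_cong[OF y, of set] by simp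
  moreover have "1 \<notin> set (map Suc y)" "1 \<notin> set (map Suc y')"
    using adm_words_pos[OF assms(6)] adm_words_pos[OF assms(7)] by fastforce+
  ultimately have "r = r'"
    using assms(2,3) by auto (metis insertI1)
  with y have "map Suc y = map Suc y'"
    by simp
  then have "y = y'"
    by (simp only: inj_map_eq_map[OF inj_Suc])
  moreover have "card (set y) = m" "card (set y') = m'"
    using assms(6,7) by (simp_all add: adm_words_def)
  ultimately have "m = m'"
    by simp
  have "inj (\<lambda>v::nat. v + Suc m)"
    by (simp add: inj_on_def)
  with x \<open>m = m'\<close> have "x = x'"
    by (simp only: inj_map_eq_map)
  with \<open>m = m'\<close> \<open>r = r'\<close> \<open>y = y'\<close> show ?thesis
    by simp
qed

lemma adm_words_Suc:
  "adm_words (Suc n) =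
     (\<lambda>(m, r, x, y). glue m r x y) ` (SIGMA m:{..n}. {[], [1]} \<times> adm_words (n - m) \<times> adm_words m)"
proof
  show "adm_words (Suc n) \<subseteq> (\<lambda>(m, r, x, y). glue m r x y) `
      (SIGMA m:{..n}. {[], [1]} \<times> adm_words (n - m) \<times> adm_words m)"
  proof
    fix w assume "w \<in> adm_words (Suc n)"
    then obtain m r x y where "m \<le> n" "r \<in> {[], [1]}" "x \<in> adm_words (n - m)" "y \<in> adm_words m"
      and "w = glue m r x y"
      by (rule adm_words_Suc_glueE)
    then show "w \<in> (\<lambda>(m, r, x, y). glue m r x y) `
        (SIGMA m:{..n}. {[], [1]} \<times> adm_words (n - m) \<times> adm_words m)"
      by (intro image_eqI[where x = "(m, r, x, y)"]) auto
  qed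
qed (auto intro: glue_in_adm_words)

lemma inj_on_glue:
  "inj_on (\<lambda>(m, r, x, y). glue m r x y) (SIGMA m:{..n}. {[], [1]} \<times> adm_words (n - m) \<times> adm_words m)"
  by (auto simp: inj_on_def dest: glue_inject)

lemma finite_adm_words: "finite (adm_words n)"
proof (induction n rule: less_induct)
  case (less n)
  show ?case
  proof (cases n)
    case 0
    then show ?thesis
      by (simp add: adm_words_def)
  next
    case (Suc k)
    have "finite (SIGMA m:{..k}. {[], [1]} \<times> adm_words (k - m) \<times> adm_words m)"
      using less Suc by (intro finite_SigmaI finite_cartesian_product) auto
    then show ?thesis
      unfolding Suc adm_words_Suc by (rule finite_imageI)
  qed
qed

section \<open>The length generating function\<close>

definition adm_words_gf :: "nat \<Rightarrow> nat fps" where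
  "adm_words_gf n = (\<Sum>w\<in>adm_words n. fps_X ^ length w)"

lemma fps_nth_adm_words_gf: "adm_words_gf n $ k = card {w \<in> adm_words n. length w = k}"
proof -
  have "adm_words_gf n $ k = (\<Sum>w\<in>adm_words n. if k = length w then 1 else 0)"
    by (simp add: adm_words_gf_def fps_sum_nth)
  also have "\<dots> = card {w \<in> adm_words n. length w = k}"
    using finite_adm_words by (simp add: sum.If_cases Int_def eq_commute)
  finally show ?thesis .
qed

lemma sum_X_power_length_glue:
  "(\<Sum>(r, x, y) \<in> {[], [1]} \<times> A \<times> B. fps_X ^ length (glue m r x y) :: nat fps) =
     (fps_X + fps_X ^ 2) * ((\<Sum>x\<in>A. fps_X ^ length x) * (\<Sum>y\<in>B. fps_X ^ length y))"
proof -
  have "(\<Sum>(r, x, y) \<in> {[], [1]} \<times> A \<times> B. fps_X ^ length (glue m r x y) :: nat fps) =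
      (\<Sum>r\<in>{[], [1::nat]}. \<Sum>x\<in>A. \<Sum>y\<in>B. fps_X ^ Suc (length r) * (fps_X ^ length x * fps_X ^ length y))"
    by (simp add: sum.cartesian_product glue_def power_add ac_simps)
  also have "\<dots> = (\<Sum>r\<in>{[], [1::nat]}. fps_X ^ Suc (length r)) *
      ((\<Sum>x\<in>A. fps_X ^ length x) * (\<Sum>y\<in>B. fps_X ^ length y))"
    by (unfold sum_distrib_right, unfold sum_distrib_left) (rule refl)
  also have "(\<Sum>r\<in>{[], [1::nat]}. fps_X ^ Suc (length r)) = (fps_X + fps_X ^ 2 :: nat fps)"
    by (simp add: power2_eq_square)
  finally show ?thesis .
qed

lemma adm_words_gf_Suc:
  "adm_words_gf (Suc n) = (fps_X + fps_X ^ 2) * (\<Sum>m\<le>n. adm_words_gf (n - m) * adm_words_gf m)"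
proof -
  have "adm_words_gf (Suc n) =
      (\<Sum>(m, r, x, y) \<in> (SIGMA m:{..n}. {[], [1]} \<times> adm_words (n - m) \<times> adm_words m).
         fps_X ^ length (glue m r x y))"
    unfolding adm_words_gf_def adm_words_Suc sum.reindex[OF inj_on_glue]
    by (simp add: case_prod_beta comp_def)
  also have "\<dots> = (\<Sum>m\<le>n. \<Sum>(r, x, y) \<in> {[], [1]} \<times> adm_words (n - m) \<times> adm_words m.
      fps_X ^ length (glue m r x y))"
    by (rule sum.Sigma[symmetric]) (simp_all add: finite_adm_words)
  also have "\<dots> = (\<Sum>m\<le>n. (fps_X + fps_X ^ 2) * (adm_words_gf (n - m) * adm_words_gf m))"
    by (simp only: sum_X_power_length_glue adm_words_gf_def)
  also have "\<dots> = (fps_X + fps_X ^ 2) * (\<Sum>m\<le>n. adm_words_gf (n - m) * adm_words_gf m)"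
    by (rule sum_distrib_left[symmetric])
  finally show ?thesis .
qed

lemma adm_words_gf_eq: "adm_words_gf n = of_nat (catalan n) * (fps_X + fps_X ^ 2) ^ n"
proof (induction n rule: less_induct)
  case (less n)
  show ?case
  proof (cases n)
    case 0
    then show ?thesis
      by (simp add: adm_words_gf_def adm_words_0 catalan_def)
  next
    case (Suc k)
    have "adm_words_gf n = (fps_X + fps_X ^ 2) * (\<Sum>m\<le>k. of_nat (catalan (k - m)) *
        (fps_X + fps_X ^ 2) ^ (k - m) * (of_nat (catalan m) * (fps_X + fps_X ^ 2) ^ m))"
      using less by (simp add: Suc adm_words_gf_Suc)
    also have "\<dots> = (\<Sum>m\<le>k. of_nat (catalan m * catalan (k - m))) * (fps_X + fps_X ^ 2) ^ Suc k"
      unfolding sum_distrib_right sum_distrib_left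
    proof (intro sum.cong refl)
      fix m assume "m \<in> {..k}"
      then have "(fps_X + fps_X ^ 2 :: nat fps) ^ (k - m) * (fps_X + fps_X ^ 2) ^ m = (fps_X + fps_X ^ 2) ^ k"
        by (simp flip: power_add)
      then show "(fps_X + fps_X ^ 2) * (of_nat (catalan (k - m)) * (fps_X + fps_X ^ 2) ^ (k - m) *
          (of_nat (catalan m) * (fps_X + fps_X ^ 2) ^ m)) =
          of_nat (catalan m * catalan (k - m)) * (fps_X + fps_X ^ 2 :: nat fps) ^ Suc k"
        by (simp add: ac_simps)
    qed
    also have "\<dots> = of_nat (catalan n) * (fps_X + fps_X ^ 2) ^ n"
      by (simp only: Suc catalan_Suc of_nat_sum)
    finally show ?thesis .
  qed
qed

lemma fps_nth_one_plus_X_power: "((1 + fps_X :: 'a::comm_semiring_1 fps) ^ n) $ k = of_nat (n choose k)"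
proof -
  have "(1 + fps_X :: 'a fps) ^ n = (\<Sum>i\<le>n. of_nat (n choose i) * fps_X ^ i)"
    using binomial_ring[of "fps_X :: 'a fps" 1 n] by (simp add: add.commute)
  then have "((1 + fps_X :: 'a fps) ^ n) $ k = (\<Sum>i\<le>n. if k = i then of_nat (n choose i) else 0)"
    by (simp add: fps_sum_nth fps_of_nat[symmetric] if_distrib[of "\<lambda>x. _ * x"] cong: if_cong)
  then show ?thesis
    by (simp add: binomial_eq_0)
qed

lemma fps_nth_X_plus_X2_power:
  assumes "n \<le> k"
  shows "((fps_X + fps_X ^ 2 :: nat fps) ^ n) $ k = n choose (k - n)"
proof -
  have "(fps_X + fps_X ^ 2 :: nat fps) ^ n = fps_X ^ n * (1 + fps_X) ^ n"
    by (simp add: power2_eq_square algebra_simps flip: power_mult_distrib)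
  with assms show ?thesis
    by (simp add: fps_X_power_mult_nth fps_nth_one_plus_X_power)
qed

theorem mainTheorem10:
  fixes b k :: nat
  assumes "1 \<le> b" and "b \<le> k"
  shows "card {w :: nat list. length w = k \<and> set w = {1..b} \<and>
            avoids w [1,1,1] \<and> avoids w [2,1,2] \<and> avoids w [1,1,2] \<and> avoids w [2,1,3]}
         = (b choose (k - b)) * catalan b"
proof -
  have "{w :: nat list. length w = k \<and> set w = {1..b} \<and>
            avoids w [1,1,1] \<and> avoids w [2,1,2] \<and> avoids w [1,1,2] \<and> avoids w [2,1,3]}
        = {w \<in> adm_words b. length w = k}"
    unfolding avoids_four_patterns_iff_admissible adm_words_def by auto
  also have "card \<dots> = adm_words_gf b $ k"
    by (simp add: fps_nth_adm_words_gf)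
  also have "\<dots> = catalan b * (b choose (k - b))"
    using assms(2) by (simp add: adm_words_gf_eq fps_nth_X_plus_X2_power fps_of_nat[symmetric])
  finally show ?thesis
    by (simp add: mult.commute)
qed

end
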